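(* Let $f:\{0,1\}^n\to\{0,1\}$ be total, $\epsilon\in[0,1/2)$, and $q$ a real polynomial with $q(x)\in[1-2\epsilon,1]$ whenever $f(x)=1$ and $q(x)\in[-1,-1+2\epsilon]$ whenever $f(x)=0$. Define the $2^n\times2^n$ matrix $B_q$ by $(B_q)_{xy}=\tfrac12(q(x)-q(y))$ if $|x\oplus y|=1$ and $(B_q)_{xy}=0$ otherwise. Then $\lambda(f)\le\frac{1}{1-2\epsilon}\|B_q\|$.
   Context: $|x\oplus y|$ is the Hamming distance. The sensitivity graph $G_f$ has vertex set $\{0,1\}^n$ and an edge between $x,y$ iff they differ in exactly one coordinate and $f(x)\ne f(y)$; $A_f$ is its adjacency matrix and $\lambda(f)=\|A_f\|$ (spectral norm). *)

theory Defs
  imports Main Complex_Main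
begin

text \<open>The Boolean cube {0,1}^n: a point x is identified with the set of coordinates
  i < n where x_i = 1.\<close>
definition cube :: "nat \<Rightarrow> nat set set" where
  "cube n = {x. x \<subseteq> {..<n}}"

definition hamming :: "nat set \<Rightarrow> nat set \<Rightarrow> nat" where
  "hamming x y = card ((x - y) \<union> (y - x))"

text \<open>Evaluation at a cube point of a real polynomial in variables x_0..x_(n-1),
  given by a finitely supported coefficient function on exponent vectors.\<close>
definition poly_eval :: "nat \<Rightarrow> ((nat \<Rightarrow> nat) \<Rightarrow> real) \<Rightarrow> nat set \<Rightarrow> real" where
  "poly_eval n c x =
     (\<Sum>\<alpha>\<in>{\<alpha>. c \<alpha> \<noteq> 0}. c \<alpha> * (\<Prod>i<n. (if i \<in> x then 1 else 0) ^ \<alpha> i))"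

definition sens_adj :: "(nat set \<Rightarrow> bool) \<Rightarrow> nat set \<Rightarrow> nat set \<Rightarrow> real" where
  "sens_adj f x y = (if hamming x y = 1 \<and> f x \<noteq> f y then 1 else 0)"

definition B_mat :: "(nat set \<Rightarrow> real) \<Rightarrow> nat set \<Rightarrow> nat set \<Rightarrow> real" where
  "B_mat q x y = (if hamming x y = 1 then (q x - q y) / 2 else 0)"

definition spec_norm :: "'a set \<Rightarrow> ('a \<Rightarrow> 'a \<Rightarrow> real) \<Rightarrow> real" where
  "spec_norm V M = Sup {sqrt (\<Sum>x\<in>V. (\<Sum>y\<in>V. M x y * v y)\<^sup>2) | v.
                         (\<Sum>x\<in>V. (v x)\<^sup>2) \<le> 1}"

definition lambda_sens :: "nat \<Rightarrow> (nat set \<Rightarrow> bool) \<Rightarrow> real" where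
  "lambda_sens n f = spec_norm (cube n) (sens_adj f)"

end

theory Submission
  imports Defs
begin

text \<open>Write \<open>P\<close> for the set where \<open>f = 1\<close> and \<open>N\<close> for its complement, and \<open>\<delta> = 1 - 2\<epsilon>\<close>, so that
  \<open>q \<ge> \<delta>\<close> on \<open>P\<close> and \<open>q \<le> -\<delta>\<close> on \<open>N\<close>. Every sensitive edge \<open>xy\<close> joins \<open>P\<close> and \<open>N\<close>, and there
  \<open>|(B\<^sub>q)\<^sub>x\<^sub>y| = |q x - q y|/2 \<ge> \<delta>\<close>, with a sign fixed by the side of \<open>x\<close>.
  Given \<open>v\<close>, split \<open>|v|\<close> into its parts \<open>w\<^sub>N\<close> and \<open>w\<^sub>P\<close> supported on \<open>N\<close> and \<open>P\<close>. Then
  \<open>\<delta> |(A\<^sub>f v)\<^sub>x| \<le> (B\<^sub>q w\<^sub>N)\<^sub>x\<close> for \<open>x \<in> P\<close> and \<open>\<delta> |(A\<^sub>f v)\<^sub>x| \<le> -(B\<^sub>q w\<^sub>P)\<^sub>x\<close> for \<open>x \<in> N\<close>, hence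
  \<open>\<delta>\<^sup>2 \<parallel>A\<^sub>f v\<parallel>\<^sup>2 \<le> \<parallel>B\<^sub>q w\<^sub>N\<parallel>\<^sup>2 + \<parallel>B\<^sub>q w\<^sub>P\<parallel>\<^sup>2 \<le> \<parallel>B\<^sub>q\<parallel>\<^sup>2 (\<parallel>w\<^sub>N\<parallel>\<^sup>2 + \<parallel>w\<^sub>P\<parallel>\<^sup>2) = \<parallel>B\<^sub>q\<parallel>\<^sup>2 \<parallel>v\<parallel>\<^sup>2\<close>.\<close>

definition mat_vec :: "'a set \<Rightarrow> ('a \<Rightarrow> 'a \<Rightarrow> real) \<Rightarrow> ('a \<Rightarrow> real) \<Rightarrow> 'a \<Rightarrow> real" where
  "mat_vec V M v x = (\<Sum>y\<in>V. M x y * v y)"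

definition sq_norm :: "'a set \<Rightarrow> ('a \<Rightarrow> real) \<Rightarrow> real" where
  "sq_norm V v = (\<Sum>x\<in>V. (v x)\<^sup>2)"

lemma sq_norm_nonneg: "0 \<le> sq_norm V v"
  unfolding sq_norm_def by (simp add: sum_nonneg)

lemma spec_norm_eq_Sup: "spec_norm V M = Sup {sqrt (sq_norm V (mat_vec V M v)) | v. sq_norm V v \<le> 1}"
  unfolding spec_norm_def sq_norm_def mat_vec_def by simp

lemma spec_norm_set_nonempty: "{sqrt (sq_norm V (mat_vec V M v)) | v. sq_norm V v \<le> 1} \<noteq> {}"
proof -
  have "sq_norm V (\<lambda>_. 0) \<le> 1" by (simp add: sq_norm_def)
  then show ?thesis by blast
qed

lemma spec_norm_bdd_above:
  assumes "finite V"
  shows "bdd_above {sqrt (sq_norm V (mat_vec V M v)) | v. sq_norm V v \<le> 1}"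
proof (rule bdd_aboveI)
  fix r assume "r \<in> {sqrt (sq_norm V (mat_vec V M v)) | v. sq_norm V v \<le> 1}"
  then obtain v where r: "r = sqrt (sq_norm V (mat_vec V M v))" and v: "sq_norm V v \<le> 1"
    by auto
  have v_le_1: "\<bar>v y\<bar> \<le> 1" if "y \<in> V" for y
  proof -
    have "(v y)\<^sup>2 \<le> sq_norm V v"
      unfolding sq_norm_def using member_le_sum[of y V "\<lambda>x. (v x)\<^sup>2"] assms that by auto
    with v have "(v y)\<^sup>2 \<le> 1" by linarith
    then show ?thesis by (simp add: abs_square_le_1)
  qed
  have "(mat_vec V M v x)\<^sup>2 \<le> (\<Sum>y\<in>V. \<bar>M x y\<bar>)\<^sup>2" for x
  proof -
    have "\<bar>mat_vec V M v x\<bar> \<le> (\<Sum>y\<in>V. \<bar>M x y * v y\<bar>)"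
      unfolding mat_vec_def by (rule sum_abs)
    also have "\<dots> \<le> (\<Sum>y\<in>V. \<bar>M x y\<bar>)"
      by (rule sum_mono) (simp add: abs_mult mult_left_le v_le_1)
    finally show ?thesis by (metis abs_ge_zero power2_abs power_mono)
  qed
  then have "sq_norm V (mat_vec V M v) \<le> (\<Sum>x\<in>V. (\<Sum>y\<in>V. \<bar>M x y\<bar>)\<^sup>2)"
    unfolding sq_norm_def by (rule sum_mono)
  with r show "r \<le> sqrt (\<Sum>x\<in>V. (\<Sum>y\<in>V. \<bar>M x y\<bar>)\<^sup>2)" by simp
qed

lemma spec_norm_nonneg:
  assumes "finite V"
  shows "0 \<le> spec_norm V M"
proof -
  have "sqrt (sq_norm V (mat_vec V M (\<lambda>_. 0))) = 0"
    by (simp add: sq_norm_def mat_vec_def)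
  moreover have "sq_norm V (\<lambda>_. 0) \<le> 1" by (simp add: sq_norm_def)
  ultimately have "0 \<in> {sqrt (sq_norm V (mat_vec V M v)) | v. sq_norm V v \<le> 1}"
    by (metis (mono_tags, lifting) mem_Collect_eq)
  from cSup_upper[OF this spec_norm_bdd_above[OF assms]] show ?thesis
    unfolding spec_norm_eq_Sup .
qed

lemma sq_norm_mat_vec_le:
  assumes "finite V"
  shows "sq_norm V (mat_vec V M w) \<le> (spec_norm V M)\<^sup>2 * sq_norm V w"
proof (cases "sq_norm V w = 0")
  case True
  then have "\<forall>y\<in>V. w y = 0"
    unfolding sq_norm_def using assms by (simp add: sum_nonneg_eq_0_iff)
  then have "sq_norm V (mat_vec V M w) = 0" by (simp add: sq_norm_def mat_vec_def)
  then show ?thesis using True by simp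
next
  case False
  define s where "s = sqrt (sq_norm V w)"
  have "0 \<le> sq_norm V w" by (rule sq_norm_nonneg)
  with False have s: "s > 0" "s\<^sup>2 = sq_norm V w"
    unfolding s_def by simp_all
  have "sq_norm V (\<lambda>y. w y / s) = sq_norm V w / s\<^sup>2"
    by (simp add: sq_norm_def power_divide sum_divide_distrib)
  with s False have unit: "sq_norm V (\<lambda>y. w y / s) = 1" by simp
  have "sqrt (sq_norm V (mat_vec V M (\<lambda>y. w y / s))) \<le> spec_norm V M"
    unfolding spec_norm_eq_Sup using unit
    by (intro cSup_upper[OF _ spec_norm_bdd_above[OF assms]]) auto
  moreover have "sq_norm V (mat_vec V M (\<lambda>y. w y / s)) = sq_norm V (mat_vec V M w) / s\<^sup>2"
    by (simp add: sq_norm_def mat_vec_def power_divide flip: sum_divide_distrib)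
  ultimately have "sq_norm V (mat_vec V M w) / s\<^sup>2 \<le> (spec_norm V M)\<^sup>2"
    by (metis sqrt_le_D)
  with s(1) have "sq_norm V (mat_vec V M w) \<le> (spec_norm V M)\<^sup>2 * s\<^sup>2"
    by (simp add: divide_le_eq)
  with s(2) show ?thesis by simp
qed

lemma spec_norm_le:
  assumes "0 \<le> K" and "\<And>v. sq_norm V (mat_vec V M v) \<le> K\<^sup>2 * sq_norm V v"
  shows "spec_norm V M \<le> K"
  unfolding spec_norm_eq_Sup
proof (rule cSup_least[OF spec_norm_set_nonempty])
  fix r assume "r \<in> {sqrt (sq_norm V (mat_vec V M v)) | v. sq_norm V v \<le> 1}"
  then obtain v where r: "r = sqrt (sq_norm V (mat_vec V M v))" and v: "sq_norm V v \<le> 1"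
    by auto
  have "sq_norm V (mat_vec V M v) \<le> K\<^sup>2"
    using assms(2)[of v] v mult_left_le[of "sq_norm V v" "K\<^sup>2"] by (simp add: sq_norm_nonneg)
  then have "sqrt (sq_norm V (mat_vec V M v)) \<le> sqrt (K\<^sup>2)" by (rule real_sqrt_le_mono)
  with r assms(1) show "r \<le> K" by simp
qed

lemma sens_adj_not: "sens_adj (\<lambda>y. \<not> f y) = sens_adj f"
  by (auto simp: sens_adj_def fun_eq_iff)

lemma mat_vec_B_mat_uminus: "mat_vec V (B_mat (\<lambda>y. - q y)) w x = - mat_vec V (B_mat q) w x"
  unfolding mat_vec_def sum_negf[symmetric] by (rule sum.cong) (simp_all add: B_mat_def field_simps)

text \<open>The row domination at \<open>x \<in> P\<close>; the case \<open>x \<in> N\<close> is the same statement for \<open>\<not> f\<close> and \<open>-q\<close>.\<close>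

lemma sens_adj_row_le_B_mat_row:
  assumes x: "x \<in> V" "f x" and "\<delta> \<ge> 0"
    and pos: "\<And>y. y \<in> V \<Longrightarrow> f y \<Longrightarrow> \<delta> \<le> q y"
    and neg: "\<And>y. y \<in> V \<Longrightarrow> \<not> f y \<Longrightarrow> q y \<le> - \<delta>"
  shows "\<delta> * \<bar>mat_vec V (sens_adj f) v x\<bar>
           \<le> mat_vec V (B_mat q) (\<lambda>y. if f y then 0 else \<bar>v y\<bar>) x"
proof -
  have "\<delta> * \<bar>mat_vec V (sens_adj f) v x\<bar> \<le> \<delta> * (\<Sum>y\<in>V. \<bar>sens_adj f x y * v y\<bar>)"
    unfolding mat_vec_def using \<open>\<delta> \<ge> 0\<close> by (intro mult_left_mono sum_abs)
  also have "\<dots> = (\<Sum>y\<in>V. \<delta> * sens_adj f x y * (if f y then 0 else \<bar>v y\<bar>))"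
    by (auto simp: sum_distrib_left sens_adj_def abs_mult x intro!: sum.cong)
  also have "\<dots> \<le> mat_vec V (B_mat q) (\<lambda>y. if f y then 0 else \<bar>v y\<bar>) x"
    unfolding mat_vec_def
  proof (rule sum_mono)
    fix y assume "y \<in> V"
    show "\<delta> * sens_adj f x y * (if f y then 0 else \<bar>v y\<bar>)
            \<le> B_mat q x y * (if f y then 0 else \<bar>v y\<bar>)"
    proof (cases "hamming x y = 1 \<and> \<not> f y")
      case True
      then have "\<delta> \<le> (q x - q y) / 2" using pos[OF x] neg[OF \<open>y \<in> V\<close>] by simp
      from mult_right_mono[OF this abs_ge_zero[of "v y"]] True x show ?thesis
        by (simp add: sens_adj_def B_mat_def)
    qed (auto simp: sens_adj_def B_mat_def)
  qed
  finally show ?thesis .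
qed

lemma sens_adj_row_sq_le:
  assumes "x \<in> V" and "\<delta> \<ge> 0"
    and pos: "\<And>y. y \<in> V \<Longrightarrow> f y \<Longrightarrow> \<delta> \<le> q y"
    and neg: "\<And>y. y \<in> V \<Longrightarrow> \<not> f y \<Longrightarrow> q y \<le> - \<delta>"
  shows "\<delta>\<^sup>2 * (mat_vec V (sens_adj f) v x)\<^sup>2
           \<le> (mat_vec V (B_mat q) (\<lambda>y. if f y then 0 else \<bar>v y\<bar>) x)\<^sup>2
             + (mat_vec V (B_mat q) (\<lambda>y. if \<not> f y then 0 else \<bar>v y\<bar>) x)\<^sup>2"
    (is "_ \<le> ?bN\<^sup>2 + ?bP\<^sup>2")
proof -
  have neg': "\<delta> \<le> - q y" if "y \<in> V" "\<not> f y" for y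
    using neg[OF that] by linarith
  have pos': "- q y \<le> - \<delta>" if "y \<in> V" "\<not> \<not> f y" for y
    using pos[of y] that by simp
  define a where "a = \<delta> * \<bar>mat_vec V (sens_adj f) v x\<bar>"
  have "0 \<le> a" unfolding a_def using \<open>\<delta> \<ge> 0\<close> by simp
  have "a \<le> ?bN" if "f x"
    using sens_adj_row_le_B_mat_row[of x V f \<delta> q v, OF \<open>x \<in> V\<close> that \<open>\<delta> \<ge> 0\<close> pos neg]
    unfolding a_def .
  moreover have "a \<le> - ?bP" if "\<not> f x"
    using sens_adj_row_le_B_mat_row[of x V "\<lambda>y. \<not> f y" \<delta> "\<lambda>y. - q y" v,
        OF \<open>x \<in> V\<close> that \<open>\<delta> \<ge> 0\<close> neg' pos']
    unfolding a_def sens_adj_not mat_vec_B_mat_uminus .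
  ultimately have "a\<^sup>2 \<le> ?bN\<^sup>2 \<or> a\<^sup>2 \<le> ?bP\<^sup>2"
    using \<open>0 \<le> a\<close> by (metis power2_minus power_mono)
  then have "a\<^sup>2 \<le> ?bN\<^sup>2 + ?bP\<^sup>2"
    using zero_le_power2[of ?bN] zero_le_power2[of ?bP] by linarith
  then show ?thesis by (simp add: a_def power_mult_distrib)
qed

lemma spec_norm_sens_adj_le:
  assumes V: "finite V" and "\<delta> > 0"
    and pos: "\<And>x. x \<in> V \<Longrightarrow> f x \<Longrightarrow> \<delta> \<le> q x"
    and neg: "\<And>x. x \<in> V \<Longrightarrow> \<not> f x \<Longrightarrow> q x \<le> - \<delta>"
  shows "spec_norm V (sens_adj f) \<le> spec_norm V (B_mat q) / \<delta>"
proof (rule spec_norm_le)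
  define K where "K = spec_norm V (B_mat q)"
  show "0 \<le> K / \<delta>"
    using spec_norm_nonneg[OF V] \<open>\<delta> > 0\<close> by (simp add: K_def)
  fix v :: "nat set \<Rightarrow> real"
  define wN where "wN = (\<lambda>y. if f y then 0 else \<bar>v y\<bar>)"
  define wP where "wP = (\<lambda>y. if \<not> f y then 0 else \<bar>v y\<bar>)"
  have sq_norm_split: "sq_norm V wN + sq_norm V wP = sq_norm V v"
    unfolding sq_norm_def sum.distrib[symmetric] by (rule sum.cong) (auto simp: wN_def wP_def)
  have "\<delta>\<^sup>2 * sq_norm V (mat_vec V (sens_adj f) v)
          \<le> sq_norm V (mat_vec V (B_mat q) wN) + sq_norm V (mat_vec V (B_mat q) wP)"
    unfolding sq_norm_def sum_distrib_left sum.distrib[symmetric] wN_def wP_def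
    using \<open>\<delta> > 0\<close> pos neg by (intro sum_mono sens_adj_row_sq_le) auto
  also have "\<dots> \<le> K\<^sup>2 * sq_norm V wN + K\<^sup>2 * sq_norm V wP"
    unfolding K_def by (intro add_mono sq_norm_mat_vec_le[OF V])
  also have "\<dots> = K\<^sup>2 * sq_norm V v"
    by (simp add: sq_norm_split flip: distrib_left)
  finally have "sq_norm V (mat_vec V (sens_adj f) v) * \<delta>\<^sup>2 \<le> K\<^sup>2 * sq_norm V v"
    by (simp only: mult.commute)
  then have "sq_norm V (mat_vec V (sens_adj f) v) \<le> K\<^sup>2 * sq_norm V v / \<delta>\<^sup>2"
    using \<open>\<delta> > 0\<close> by (intro pos_le_divide_eq[THEN iffD2]) simp_all
  then show "sq_norm V (mat_vec V (sens_adj f) v) \<le> (K / \<delta>)\<^sup>2 * sq_norm V v"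
    by (simp add: power_divide)
qed

theorem lemma4p13:
  fixes n :: nat and f :: "nat set \<Rightarrow> bool" and \<epsilon> :: real
    and c :: "(nat \<Rightarrow> nat) \<Rightarrow> real"
  assumes "0 \<le> \<epsilon>" and "\<epsilon> < 1/2"
    and "finite {\<alpha>. c \<alpha> \<noteq> 0}"
    and "\<And>x. x \<in> cube n \<Longrightarrow> f x \<Longrightarrow>
           1 - 2*\<epsilon> \<le> poly_eval n c x \<and> poly_eval n c x \<le> 1"
    and "\<And>x. x \<in> cube n \<Longrightarrow> \<not> f x \<Longrightarrow>
           -1 \<le> poly_eval n c x \<and> poly_eval n c x \<le> -1 + 2*\<epsilon>"
  shows "lambda_sens n f \<le> (1 / (1 - 2*\<epsilon>)) * spec_norm (cube n) (B_mat (poly_eval n c))"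
proof -
  have "finite (cube n)" unfolding cube_def by simp
  moreover have "0 < 1 - 2*\<epsilon>" using assms(2) by simp
  moreover have "1 - 2*\<epsilon> \<le> poly_eval n c x" if "x \<in> cube n" "f x" for x
    using assms(4)[OF that] by simp
  moreover have "poly_eval n c x \<le> - (1 - 2*\<epsilon>)" if "x \<in> cube n" "\<not> f x" for x
    using assms(5)[OF that] by simp
  ultimately have "spec_norm (cube n) (sens_adj f)
                     \<le> spec_norm (cube n) (B_mat (poly_eval n c)) / (1 - 2*\<epsilon>)"
    by (rule spec_norm_sens_adj_le)
  then show ?thesis unfolding lambda_sens_def by simp
qed

end
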